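(* Let $\star$ be a Weyl star product on $C^\infty(\mathbb R^N)[[\alpha]]$ satisfying the stability of unity. Then for every $n\ge2$, all indices $i_1,\dots,i_n$ and every $f$, $$\sum_{k=1}^nA\Big(x^{i_k},\ \prod_{l\ne k}x^{i_l},\ f\Big)=0,$$ where $\prod_{l\ne k}x^{i_l}$ is the ordinary product of the coordinate functions $x^{i_l}$ with $l\ne k$.
   Context: Work on $\mathbb R^N$ with real coordinates $x^1,\dots,x^N$. Functions are complex-valued smooth functions on $\mathbb R^N$. A star product is a $\mathbb C[[\alpha]]$-bilinear map on $C^\infty(\mathbb R^N)[[\alpha]]$ (formal power series in the real formal parameter $\alpha$). On functions it is given by $f\star g=fg+\sum_{r\ge1}(i\alpha)^rC_r(f,g)$, where the $C_r$ are bilinear bidifferential operators. The associator is $A(f,g,h)=f\star(g\star h)-(f\star g)\star h$. Definitions: - Weyl star product: for every $n\ge1$, all indices $i_1,\dots,i_n$ and all $f$, $$(x^{i_1}\cdots x^{i_n})\star f=\frac1{n!}\sum_{\sigma\in S_n}x^{i_{\sigma(1)}}\star\big(x^{i_{\sigma(2)}}\star(\cdots\star(x^{i_{\sigma(n)}}\star f)\cdots)\big),$$ where $x^{i_1}\cdots x^{i_n}$ denotes the ordinary product. - Stability of unity: $f\star1=1\star f=f$ for all $f$. *)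

theory Defs
  imports "HOL-Analysis.Analysis" "HOL-Combinatorics.Permutations"
begin

text \<open>Functions on R^N: complex-valued functions on the type real^'n (N = CARD('n)).
  Formal power series in alpha with function coefficients: nat => function,
  the m-th entry being the coefficient of alpha^m.\<close>

type_synonym 'n func = "real^'n \<Rightarrow> complex"
type_synonym 'n ser = "nat \<Rightarrow> 'n func"

definition partial :: "'n::finite \<Rightarrow> 'n func \<Rightarrow> 'n func" where
  "partial i g = (\<lambda>x. vector_derivative (\<lambda>t::real. g (x + t *\<^sub>R axis i 1)) (at 0))"

fun pd :: "'n::finite list \<Rightarrow> 'n func \<Rightarrow> 'n func" where
  "pd [] g = g"
| "pd (i # is) g = partial i (pd is g)"

definition smooth :: "'n::finite func \<Rightarrow> bool" where
  "smooth g \<longleftrightarrow> (\<forall>is. continuous_on UNIV (pd is g) \<and>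
      (\<forall>i x. (\<lambda>t::real. pd is g (x + t *\<^sub>R axis i 1)) differentiable (at 0)))"

definition smooth_ser :: "'n::finite ser \<Rightarrow> bool" where
  "smooth_ser F \<longleftrightarrow> (\<forall>m. smooth (F m))"

definition bidiff :: "('n::finite func \<Rightarrow> 'n func \<Rightarrow> 'n func) \<Rightarrow> bool" where
  "bidiff D \<longleftrightarrow> (\<exists>S c. finite (S :: ('n list \<times> 'n list) set) \<and> (\<forall>p\<in>S. smooth (c p)) \<and>
      (\<forall>f g. smooth f \<longrightarrow> smooth g \<longrightarrow>
         D f g = (\<lambda>x. \<Sum>p\<in>S. c p x * pd (fst p) f x * pd (snd p) g x)))"

text \<open>A star product is determined by its cochains C r (r >= 1), which are
  bidifferential operators; C 0 is the pointwise product.\<close>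
definition star_cochains :: "(nat \<Rightarrow> 'n::finite func \<Rightarrow> 'n func \<Rightarrow> 'n func) \<Rightarrow> bool" where
  "star_cochains C \<longleftrightarrow> (\<forall>r\<ge>1. bidiff (C r))"

definition Cfull :: "(nat \<Rightarrow> 'n func \<Rightarrow> 'n func \<Rightarrow> 'n func) \<Rightarrow> nat \<Rightarrow> 'n func \<Rightarrow> 'n func \<Rightarrow> 'n func" where
  "Cfull C r f g = (if r = 0 then (\<lambda>x. f x * g x) else C r f g)"

text \<open>The C[[alpha]]-bilinear extension of f*g = fg + sum_r (i alpha)^r C_r(f,g)
  to formal power series, coefficientwise.\<close>
definition star :: "(nat \<Rightarrow> 'n func \<Rightarrow> 'n func \<Rightarrow> 'n func) \<Rightarrow> 'n ser \<Rightarrow> 'n ser \<Rightarrow> 'n ser" where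
  "star C F G = (\<lambda>m x. \<Sum>p\<le>m. \<Sum>q\<le>m - p. \<i> ^ (m - p - q) * Cfull C (m - p - q) (F p) (G q) x)"

definition emb :: "'n func \<Rightarrow> 'n ser" where
  "emb f = (\<lambda>m. if m = 0 then f else (\<lambda>_. 0))"

definition coord :: "'n::finite \<Rightarrow> 'n func" where
  "coord i = (\<lambda>x. complex_of_real (x $ i))"

definition coordprod :: "'n::finite list \<Rightarrow> 'n func" where
  "coordprod is = (\<lambda>x. \<Prod>j<length is. coord (is ! j) x)"

definition lstar :: "(nat \<Rightarrow> 'n::finite func \<Rightarrow> 'n func \<Rightarrow> 'n func) \<Rightarrow> 'n list \<Rightarrow> 'n ser \<Rightarrow> 'n ser" where
  "lstar C js F = foldr (\<lambda>i G. star C (emb (coord i)) G) js F"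

definition associator :: "(nat \<Rightarrow> 'n func \<Rightarrow> 'n func \<Rightarrow> 'n func) \<Rightarrow> 'n ser \<Rightarrow> 'n ser \<Rightarrow> 'n ser \<Rightarrow> 'n ser" where
  "associator C F G H = (\<lambda>m x. star C F (star C G H) m x - star C (star C F G) H m x)"

definition weyl :: "(nat \<Rightarrow> 'n::finite func \<Rightarrow> 'n func \<Rightarrow> 'n func) \<Rightarrow> bool" where
  "weyl C \<longleftrightarrow> (\<forall>is f. length is \<ge> 1 \<longrightarrow> smooth f \<longrightarrow>
      star C (emb (coordprod is)) (emb f) =
      (\<lambda>m x. (1 / of_nat (fact (length is))) *
         (\<Sum>\<sigma>\<in>{\<sigma>. \<sigma> permutes {..<length is}}.
            lstar C (map (\<lambda>j. is ! \<sigma> j) [0..<length is]) (emb f) m x)))"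

definition stable_unity :: "(nat \<Rightarrow> 'n::finite func \<Rightarrow> 'n func \<Rightarrow> 'n func) \<Rightarrow> bool" where
  "stable_unity C \<longleftrightarrow> (\<forall>f. smooth f \<longrightarrow>
      star C (emb f) (emb (\<lambda>_. 1)) = emb f \<and> star C (emb (\<lambda>_. 1)) (emb f) = emb f)"

end

theory Submission
  imports Defs "HOL-Combinatorics.Multiset_Permutations"
begin

text \<open>Write \<open>P\<^sub>k\<close> for the product of the coordinates other than \<open>x^{i_k}\<close>.
  By the Weyl property for \<open>P\<^sub>k\<close>, \<open>x^{i_k} \<star> (P\<^sub>k \<star> f)\<close> is the average, over the
  orderings \<open>j\<^sub>1, \<dots>, j\<^sub>n\<close> of the indices with \<open>j\<^sub>1 = i\<^sub>k\<close>, of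
  \<open>x^{j_1} \<star> (\<dots> \<star> (x^{j_n} \<star> f))\<close>. Every ordering begins with exactly one \<open>i\<^sub>k\<close>, so by
  the Weyl property for the full product, \<open>\<Sum>\<^sub>k x^{i_k} \<star> (P\<^sub>k \<star> f) = n (x^{i_1}\<cdots>x^{i_n}) \<star> f\<close>.
  For \<open>f = 1\<close> stability of unity turns this into \<open>\<Sum>\<^sub>k x^{i_k} \<star> P\<^sub>k = n x^{i_1}\<cdots>x^{i_n}\<close>,
  hence by linearity \<open>\<Sum>\<^sub>k (x^{i_k} \<star> P\<^sub>k) \<star> f\<close> has the same value and the associators
  cancel.\<close>

definition axis_differentiable :: "'n::finite func \<Rightarrow> bool" where
  "axis_differentiable g \<longleftrightarrow>
     (\<forall>i x. (\<lambda>t::real. g (x + t *\<^sub>R axis i 1)) differentiable (at 0))"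

lemma smooth_iff_pd:
  "smooth g \<longleftrightarrow> (\<forall>is. continuous_on UNIV (pd is g) \<and> axis_differentiable (pd is g))"
  unfolding smooth_def axis_differentiable_def by auto

lemma pd_append: "pd (is @ js) g = pd is (pd js g)"
  by (induction "is") auto

lemma axis_differentiable_const: "axis_differentiable (\<lambda>_. c)"
  unfolding axis_differentiable_def by auto

lemma axis_differentiable_add:
  "axis_differentiable u \<Longrightarrow> axis_differentiable v \<Longrightarrow> axis_differentiable (\<lambda>x. u x + v x)"
  unfolding axis_differentiable_def by (auto intro!: differentiable_add)

lemma axis_differentiable_mult:
  "axis_differentiable u \<Longrightarrow> axis_differentiable v \<Longrightarrow> axis_differentiable (\<lambda>x. u x * v x)"
  unfolding axis_differentiable_def by (auto intro!: differentiable_mult)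

lemma axis_differentiable_lincomb:
  assumes "finite J" "\<forall>j\<in>J. axis_differentiable (g j)"
  shows "axis_differentiable (\<lambda>x. \<Sum>j\<in>J. c j * g j x)"
  using assms unfolding axis_differentiable_def
  by (auto intro!: differentiable_sum differentiable_mult)

lemma partial_const: "partial i (\<lambda>_. c) = (\<lambda>_. 0)"
  unfolding partial_def by (auto intro!: ext vector_derivative_at)

lemma pd_const: "pd is (\<lambda>_. c) = (\<lambda>_. if is = [] then c else 0)"
  by (induction "is") (auto simp: partial_const)

lemma partial_add:
  assumes "axis_differentiable u" "axis_differentiable v"
  shows "partial i (\<lambda>x. u x + v x) = (\<lambda>x. partial i u x + partial i v x)"
  using assms unfolding axis_differentiable_def partial_def
  by (auto intro!: ext vector_derivative_add_at)

lemma partial_mult: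
  assumes "axis_differentiable u" "axis_differentiable v"
  shows "partial i (\<lambda>x. u x * v x) = (\<lambda>x. partial i u x * v x + u x * partial i v x)"
  using assms unfolding axis_differentiable_def partial_def
  by (auto intro!: ext simp: vector_derivative_mult_at)

lemma partial_lincomb:
  assumes "finite J" "\<forall>j\<in>J. axis_differentiable (g j)"
  shows "partial i (\<lambda>x. \<Sum>j\<in>J. c j * g j x) = (\<lambda>x. \<Sum>j\<in>J. c j * partial i (g j) x)"
proof
  fix x
  let ?line = "\<lambda>j t. g j (x + t *\<^sub>R axis i 1)"
  have "(?line j has_vector_derivative vector_derivative (?line j) (at 0)) (at 0)" if "j \<in> J" for j
    using assms(2) that unfolding axis_differentiable_def
    by (auto intro: vector_derivative_works[THEN iffD1])
  then have "((\<lambda>t. \<Sum>j\<in>J. c j * ?line j t) has_vector_derivative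
      (\<Sum>j\<in>J. c j * vector_derivative (?line j) (at 0))) (at 0)"
    by (intro has_vector_derivative_sum has_vector_derivative_mult_right) auto
  then show "partial i (\<lambda>x. \<Sum>j\<in>J. c j * g j x) x = (\<Sum>j\<in>J. c j * partial i (g j) x)"
    unfolding partial_def by (rule vector_derivative_at)
qed

lemma pd_lincomb:
  assumes "finite J" "\<forall>j\<in>J. smooth (g j)"
  shows "pd is (\<lambda>x. \<Sum>j\<in>J. c j * g j x) = (\<lambda>x. \<Sum>j\<in>J. c j * pd is (g j) x)"
proof (induction "is")
  case (Cons i "is")
  have "\<forall>j\<in>J. axis_differentiable (pd is (g j))"
    using assms(2) unfolding smooth_iff_pd by blast
  with Cons show ?case by (simp add: partial_lincomb[OF assms(1)])
qed simp

lemma pd_add: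
  assumes "\<And>ks. length ks < length js \<Longrightarrow>
             axis_differentiable (pd ks u) \<and> axis_differentiable (pd ks v)"
  shows "pd js (\<lambda>x. u x + v x) = (\<lambda>x. pd js u x + pd js v x)"
  using assms by (induction js) (auto simp: partial_add)

lemma smooth_const: "smooth (\<lambda>_. c)"
  unfolding smooth_iff_pd pd_const by (auto simp: axis_differentiable_const)

lemma smooth_pd: "smooth g \<Longrightarrow> smooth (pd js g)"
  unfolding smooth_iff_pd by (metis pd_append)

lemma smooth_lincomb:
  assumes "finite J" "\<forall>j\<in>J. smooth (g j)"
  shows "smooth (\<lambda>x. \<Sum>j\<in>J. c j * g j x)"
  using assms unfolding smooth_iff_pd pd_lincomb[OF assms]
  by (auto intro!: continuous_intros axis_differentiable_lincomb)

lemma smooth_sum: "finite J \<Longrightarrow> \<forall>j\<in>J. smooth (g j) \<Longrightarrow> smooth (\<lambda>x. \<Sum>j\<in>J. g j x)"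
  using smooth_lincomb[of J g "\<lambda>_. 1"] by simp

lemma smooth_mult:
  assumes "smooth g" "smooth h"
  shows "smooth (\<lambda>x. g x * h x)"
proof -
  have "continuous_on UNIV (pd is (\<lambda>x. g x * h x)) \<and> axis_differentiable (pd is (\<lambda>x. g x * h x))"
    if "smooth g" "smooth h" for "is" and g h :: "'n::finite func"
    using that
  proof (induction "is" arbitrary: g h rule: length_induct)
    case (1 "is")
    have g: "continuous_on UNIV g" "axis_differentiable g"
      and h: "continuous_on UNIV h" "axis_differentiable h"
      using "1.prems" unfolding smooth_iff_pd by (metis pd.simps(1))+
    show ?case
    proof (cases "is" rule: rev_exhaust)
      case Nil
      with g h show ?thesis by (auto intro!: continuous_intros axis_differentiable_mult)
    next
      case (snoc js i)
      have "smooth (partial i g)" "smooth (partial i h)"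
        using "1.prems" smooth_pd[of _ "[i]"] by auto
      then have IH: "continuous_on UNIV (pd ks (\<lambda>x. partial i g x * h x))
          \<and> axis_differentiable (pd ks (\<lambda>x. partial i g x * h x))
          \<and> continuous_on UNIV (pd ks (\<lambda>x. g x * partial i h x))
          \<and> axis_differentiable (pd ks (\<lambda>x. g x * partial i h x))"
        if "length ks < length is" for ks
        using "1.IH" "1.prems" that by blast
      have "pd is (\<lambda>x. g x * h x) = pd js (\<lambda>x. partial i g x * h x + g x * partial i h x)"
        using snoc by (simp add: pd_append partial_mult g(2) h(2))
      also have "\<dots> = (\<lambda>x. pd js (\<lambda>x. partial i g x * h x) x + pd js (\<lambda>x. g x * partial i h x) x)"
        by (rule pd_add) (use IH snoc in auto)
      finally show ?thesis
        using IH[of js] snoc by (auto intro!: continuous_intros axis_differentiable_add)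
    qed
  qed
  with assms show ?thesis unfolding smooth_iff_pd by blast
qed

lemma partial_coord: "partial j (coord i) = (\<lambda>_. complex_of_real (axis j 1 $ i))"
proof
  fix x :: "real^'a"
  have "((\<lambda>t::real. complex_of_real (x $ i + t * axis j 1 $ i)) has_vector_derivative
          complex_of_real (axis j 1 $ i)) (at 0)"
    by (rule has_vector_derivative_of_real) (auto intro!: derivative_eq_intros)
  then show "partial j (coord i) x = complex_of_real (axis j 1 $ i)"
    unfolding partial_def coord_def by (simp add: vector_derivative_at)
qed

lemma smooth_coord: "smooth (coord i)"
  unfolding smooth_iff_pd
proof
  fix "is" :: "'a list"
  show "continuous_on UNIV (pd is (coord i)) \<and> axis_differentiable (pd is (coord i))"
  proof (cases "is" rule: rev_exhaust)
    case Nil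
    then show ?thesis
      unfolding coord_def axis_differentiable_def
      by (auto intro!: continuous_intros derivative_intros bounded_linear_of_real
          differentiable_compose[of complex_of_real] bounded_linear_imp_differentiable)
  next
    case (snoc js j)
    then show ?thesis by (simp add: pd_append partial_coord pd_const axis_differentiable_const)
  qed
qed

lemma coordprod_Cons: "coordprod (i # is) = (\<lambda>x. coord i x * coordprod is x)"
  unfolding coordprod_def by (simp del: prod.lessThan_Suc add: prod.lessThan_Suc_shift)

lemma smooth_coordprod: "smooth (coordprod is)"
  by (induction "is") (simp_all only: coordprod_Cons smooth_mult smooth_coord,
      simp add: coordprod_def smooth_const)


lemma bidiff_smooth:
  assumes "bidiff D" "smooth f" "smooth g"
  shows "smooth (D f g)"
proof -
  obtain S c where "finite (S :: ('a list \<times> 'a list) set)" "\<forall>p\<in>S. smooth (c p)"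
    and D: "D f g = (\<lambda>x. \<Sum>p\<in>S. c p x * pd (fst p) f x * pd (snd p) g x)"
    using assms unfolding bidiff_def by blast
  then show ?thesis
    using assms(2,3) by (auto intro!: smooth_sum smooth_mult smooth_pd)
qed

lemma bidiff_lincomb:
  assumes "bidiff D" "smooth a" "finite J" "\<forall>j\<in>J. smooth (g j)"
  shows "D a (\<lambda>x. \<Sum>j\<in>J. c j * g j x) = (\<lambda>x. \<Sum>j\<in>J. c j * D a (g j) x)"
    and "D (\<lambda>x. \<Sum>j\<in>J. c j * g j x) a = (\<lambda>x. \<Sum>j\<in>J. c j * D (g j) a x)"
proof -
  obtain S e where "finite (S :: ('a list \<times> 'a list) set)"
    and D: "\<And>f g. smooth f \<Longrightarrow> smooth g \<Longrightarrow>
         D f g = (\<lambda>x. \<Sum>p\<in>S. e p x * pd (fst p) f x * pd (snd p) g x)"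
    using assms(1) unfolding bidiff_def by blast
  have "smooth (\<lambda>x. \<Sum>j\<in>J. c j * g j x)"
    using assms(3,4) by (rule smooth_lincomb)
  then show "D a (\<lambda>x. \<Sum>j\<in>J. c j * g j x) = (\<lambda>x. \<Sum>j\<in>J. c j * D a (g j) x)"
    and "D (\<lambda>x. \<Sum>j\<in>J. c j * g j x) a = (\<lambda>x. \<Sum>j\<in>J. c j * D (g j) a x)"
    using assms(2,4)
    by (auto intro!: ext sum.cong simp: D pd_lincomb[OF assms(3,4)] sum_distrib_left
        sum_distrib_right mult_ac intro: sum.swap[THEN trans])
qed

lemma Cfull_smooth:
  "star_cochains C \<Longrightarrow> smooth f \<Longrightarrow> smooth g \<Longrightarrow> smooth (Cfull C r f g)"
  unfolding Cfull_def star_cochains_def by (auto intro: smooth_mult bidiff_smooth)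

lemma Cfull_lincomb:
  assumes "star_cochains C" "smooth a" "finite J" "\<forall>j\<in>J. smooth (g j)"
  shows "Cfull C r a (\<lambda>x. \<Sum>j\<in>J. c j * g j x) x = (\<Sum>j\<in>J. c j * Cfull C r a (g j) x)"
    and "Cfull C r (\<lambda>x. \<Sum>j\<in>J. c j * g j x) a x = (\<Sum>j\<in>J. c j * Cfull C r (g j) a x)"
proof -
  have "r = 0 \<or> bidiff (C r)"
    using assms(1) unfolding star_cochains_def by (cases r) auto
  then show "Cfull C r a (\<lambda>x. \<Sum>j\<in>J. c j * g j x) x = (\<Sum>j\<in>J. c j * Cfull C r a (g j) x)"
    and "Cfull C r (\<lambda>x. \<Sum>j\<in>J. c j * g j x) a x = (\<Sum>j\<in>J. c j * Cfull C r (g j) a x)"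
    using bidiff_lincomb[OF _ assms(2-4)]
    by (auto simp: Cfull_def sum_distrib_left sum_distrib_right mult_ac)
qed

lemma smooth_ser_emb: "smooth f \<Longrightarrow> smooth_ser (emb f)"
  unfolding smooth_ser_def emb_def by (auto simp: smooth_const)

lemma smooth_ser_star:
  assumes "star_cochains C" "smooth_ser F" "smooth_ser G"
  shows "smooth_ser (star C F G)"
  using assms unfolding smooth_ser_def star_def
  by (auto intro!: smooth_sum[where g="\<lambda>p x. \<Sum>q\<le>_ - p. _ p q x"] smooth_lincomb Cfull_smooth)

lemma lstar_Cons: "lstar C (i # is) F = star C (emb (coord i)) (lstar C is F)"
  unfolding lstar_def by simp

lemma smooth_ser_lstar: "star_cochains C \<Longrightarrow> smooth_ser F \<Longrightarrow> smooth_ser (lstar C is F)"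
  by (induction "is") (simp_all add: lstar_def,
      simp add: lstar_Cons smooth_ser_star smooth_ser_emb smooth_coord)

lemma star_lincomb:
  assumes "star_cochains C" "smooth_ser F" "finite J" "\<forall>j\<in>J. smooth_ser (G j)"
  shows "star C F (\<lambda>m x. \<Sum>j\<in>J. c j * G j m x) m x = (\<Sum>j\<in>J. c j * star C F (G j) m x)"
    and "star C (\<lambda>m x. \<Sum>j\<in>J. c j * G j m x) F m x = (\<Sum>j\<in>J. c j * star C (G j) F m x)"
  using assms unfolding star_def smooth_ser_def
  by (simp_all add: Cfull_lincomb[OF assms(1) _ assms(3)] sum_distrib_left mult_ac
      sum.swap[of _ J])

lemma bij_betw_map_permutes:
  "bij_betw (\<lambda>\<sigma>. map \<sigma> [0..<n]) {\<sigma>. \<sigma> permutes {..<n}} (permutations_of_set {..<n})"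
proof (rule bij_betw_imageI)
  show "inj_on (\<lambda>\<sigma>. map \<sigma> [0..<n]) {\<sigma>. \<sigma> permutes {..<n}}"
  proof (rule inj_onI, rule ext)
    fix \<sigma> \<tau> j
    assume "\<sigma> \<in> {\<sigma>. \<sigma> permutes {..<n}}" "\<tau> \<in> {\<sigma>. \<sigma> permutes {..<n}}"
      and "map \<sigma> [0..<n] = map \<tau> [0..<n]"
    then show "\<sigma> j = \<tau> j"
      by (cases "j < n") (auto simp: permutes_def map_eq_conv)
  qed
  show "(\<lambda>\<sigma>. map \<sigma> [0..<n]) ` {\<sigma>. \<sigma> permutes {..<n}} = permutations_of_set {..<n}"
  proof (intro equalityI subsetI)
    fix ps assume "ps \<in> (\<lambda>\<sigma>. map \<sigma> [0..<n]) ` {\<sigma>. \<sigma> permutes {..<n}}"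
    then obtain \<sigma> where \<sigma>: "\<sigma> permutes {..<n}" and ps: "ps = map \<sigma> [0..<n]" by blast
    have "set ps = {..<n}"
      using permutes_image[OF \<sigma>] ps by (simp add: atLeast0LessThan)
    moreover have "distinct ps"
      using permutes_inj_on[OF \<sigma>] ps by (simp add: distinct_map inj_on_subset)
    ultimately show "ps \<in> permutations_of_set {..<n}" by blast
  next
    fix ps assume ps: "ps \<in> permutations_of_set {..<n}"
    have len: "length ps = n"
      using length_finite_permutations_of_set[OF ps] by simp
    have set: "set ps = {..<n}" and dist: "distinct ps"
      using permutations_of_setD[OF ps] by auto
    define \<sigma> where "\<sigma> j = (if j < n then ps ! j else j)" for j
    have "inj_on \<sigma> {..<n}"
      using dist len unfolding \<sigma>_def by (auto simp: inj_on_def nth_eq_iff_index_eq)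
    moreover have "\<sigma> ` {..<n} = {..<n}"
      using set len unfolding \<sigma>_def by (auto simp: set_conv_nth)
    ultimately have "\<sigma> permutes {..<n}"
      by (intro bij_imp_permutes) (auto simp: bij_betw_def \<sigma>_def)
    moreover have "map \<sigma> [0..<n] = ps"
      using len by (auto intro!: nth_equalityI simp: \<sigma>_def)
    ultimately show "ps \<in> (\<lambda>\<sigma>. map \<sigma> [0..<n]) ` {\<sigma>. \<sigma> permutes {..<n}}" by force
  qed
qed

lemma sum_permutations_of_set_first:
  assumes "finite A" "A \<noteq> {}"
  shows "(\<Sum>ps\<in>permutations_of_set A. H ps)
       = (\<Sum>k\<in>A. \<Sum>ps\<in>permutations_of_set (A - {k}). H (k # ps))"
proof -
  have "(\<Sum>ps\<in>permutations_of_set A. H ps) =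
        (\<Sum>k\<in>A. \<Sum>ps\<in>(#) k ` permutations_of_set (A - {k}). H ps)"
    unfolding permutations_of_set_nonempty[OF assms(2)]
    by (rule sum.UNION_disjoint) (use assms(1) in auto)
  also have "\<dots> = (\<Sum>k\<in>A. \<Sum>ps\<in>permutations_of_set (A - {k}). H (k # ps))"
    by (simp add: sum.reindex)
  finally show ?thesis .
qed

lemma bij_betw_skip:
  assumes "k < n"
  shows "bij_betw (\<lambda>j. if j < k then j else Suc j) {..<n - 1} ({..<n} - {k})"
proof (rule bij_betw_imageI)
  show "inj_on (\<lambda>j. if j < k then j else Suc j) {..<n - 1}"
    by (auto simp: inj_on_def)
  have "y \<in> (\<lambda>j. if j < k then j else Suc j) ` {..<n - 1}" if "y \<in> {..<n} - {k}" for y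
    using that assms
    by (cases "y < k") (auto intro!: image_eqI[of _ _ y] image_eqI[of _ _ "y - 1"])
  then show "(\<lambda>j. if j < k then j else Suc j) ` {..<n - 1} = {..<n} - {k}"
    using assms by auto
qed

lemma nth_remove_nth:
  assumes "k < length is" "j < length is - 1"
  shows "(take k is @ drop (Suc k) is) ! j = is ! (if j < k then j else Suc j)"
  using assms by (auto simp: nth_append min_def)

lemma bij_betw_map_permutations_of_set:
  assumes "bij_betw e A B"
  shows "bij_betw (map e) (permutations_of_set A) (permutations_of_set B)"
proof (rule bij_betw_imageI)
  have "inj_on e A" "B = e ` A"
    using assms by (auto simp: bij_betw_def)
  then show "inj_on (map e) (permutations_of_set A)"
    and "map e ` permutations_of_set A = permutations_of_set B"
    by (auto intro!: inj_on_mapI inj_on_subset[of e A] dest: permutations_of_setD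
        simp: permutations_of_set_image_inj)
qed

lemma weyl_star_coordprod:
  fixes C :: "nat \<Rightarrow> 'n::finite func \<Rightarrow> 'n func \<Rightarrow> 'n func"
  assumes "weyl C" "smooth g" "l \<noteq> []"
  shows "star C (emb (coordprod l)) (emb g) =
    (\<lambda>m x. (1 / of_nat (fact (length l))) *
       (\<Sum>ps\<in>permutations_of_set {..<length l}. lstar C (map ((!) l) ps) (emb g) m x))"
proof -
  have "(\<Sum>\<sigma>\<in>{\<sigma>. \<sigma> permutes {..<length l}}. lstar C (map (\<lambda>j. l ! \<sigma> j) [0..<length l]) (emb g) m x)
      = (\<Sum>ps\<in>permutations_of_set {..<length l}. lstar C (map ((!) l) ps) (emb g) m x)" for m x
    using sum.reindex_bij_betw[OF bij_betw_map_permutes, of "\<lambda>ps. lstar C (map ((!) l) ps) (emb g) m x"]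
    by (simp add: map_map comp_def)
  with assms show ?thesis
    unfolding weyl_def by (simp add: Suc_le_eq)
qed

lemma star_coord_star_coordprod_remove_nth:
  fixes C :: "nat \<Rightarrow> 'n::finite func \<Rightarrow> 'n func \<Rightarrow> 'n func"
  assumes C: "star_cochains C" and W: "weyl C" and g: "smooth g"
    and k: "k < length is" and n: "length is \<ge> 2"
  shows "star C (emb (coord (is ! k))) (star C (emb (coordprod (take k is @ drop (Suc k) is))) (emb g)) m x
       = (1 / of_nat (fact (length is - 1))) *
         (\<Sum>ps\<in>permutations_of_set ({..<length is} - {k}). lstar C (map ((!) is) (k # ps)) (emb g) m x)"
proof -
  define l where "l = take k is @ drop (Suc k) is"
  define skip where "skip j = (if j < k then j else Suc j)" for j
  have len: "length l = length is - 1"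
    using k by (simp add: l_def)
  have l_perm: "map ((!) l) ps = map ((!) is) (map skip ps)"
    if "ps \<in> permutations_of_set {..<length l}" for ps
    using permutations_of_setD[OF that] nth_remove_nth[OF k] len by (auto simp: l_def skip_def)
  have "l \<noteq> []"
    using n len by auto
  have "star C (emb (coord (is ! k))) (star C (emb (coordprod l)) (emb g)) m x
      = (\<Sum>ps\<in>permutations_of_set {..<length l}. (1 / of_nat (fact (length l))) *
           star C (emb (coord (is ! k))) (lstar C (map ((!) l) ps) (emb g)) m x)"
    unfolding weyl_star_coordprod[OF W g \<open>l \<noteq> []\<close>] sum_distrib_left
    by (rule star_lincomb(1)[OF C, where c="\<lambda>_. 1 / of_nat (fact (length l))"])
      (use n len in \<open>auto intro: smooth_ser_emb smooth_coord smooth_ser_lstar[OF C] g\<close>)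
  also have "\<dots> = (1 / of_nat (fact (length is - 1))) *
      (\<Sum>ps\<in>permutations_of_set {..<length is - 1}. lstar C (map ((!) is) (k # map skip ps)) (emb g) m x)"
    by (simp add: lstar_Cons sum_distrib_left l_perm len cong: sum.cong)
  also have "\<dots> = (1 / of_nat (fact (length is - 1))) *
      (\<Sum>ps\<in>permutations_of_set ({..<length is} - {k}). lstar C (map ((!) is) (k # ps)) (emb g) m x)"
    using sum.reindex_bij_betw[OF bij_betw_map_permutations_of_set[OF bij_betw_skip[OF k]],
        of "\<lambda>ps. lstar C (map ((!) is) (k # ps)) (emb g) m x"]
    by (simp add: skip_def map_map comp_def)
  finally show ?thesis
    unfolding l_def .
qed

lemma sum_star_coord_star_coordprod_remove_nth:
  fixes C :: "nat \<Rightarrow> 'n::finite func \<Rightarrow> 'n func \<Rightarrow> 'n func"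
  assumes C: "star_cochains C" and W: "weyl C" and g: "smooth g" and n: "length is \<ge> 2"
  shows "(\<Sum>k<length is. star C (emb (coord (is ! k)))
            (star C (emb (coordprod (take k is @ drop (Suc k) is))) (emb g)) m x)
       = of_nat (length is) * star C (emb (coordprod is)) (emb g) m x"
proof -
  define N where "N = length is"
  define T where "T = (\<Sum>ps\<in>permutations_of_set {..<N}. lstar C (map ((!) is) ps) (emb g) m x)"
  have N: "N \<noteq> 0" "is \<noteq> []"
    using n by (auto simp: N_def)
  have "(\<Sum>k<length is. star C (emb (coord (is ! k)))
            (star C (emb (coordprod (take k is @ drop (Suc k) is))) (emb g)) m x)
      = (1 / of_nat (fact (N - 1))) *
        (\<Sum>k<N. \<Sum>ps\<in>permutations_of_set ({..<N} - {k}). lstar C (map ((!) is) (k # ps)) (emb g) m x)"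
    using star_coord_star_coordprod_remove_nth[OF C W g _ n] by (simp add: N_def sum_distrib_left)
  also have "\<dots> = (1 / of_nat (fact (N - 1))) * T"
    unfolding T_def using N by (subst sum_permutations_of_set_first) auto
  also have "\<dots> = of_nat N * ((1 / of_nat (fact N)) * T)"
    using N by (simp add: fact_reduce[of N])
  also have "(1 / of_nat (fact N)) * T = star C (emb (coordprod is)) (emb g) m x"
    using weyl_star_coordprod[OF W g N(2)] by (simp add: N_def T_def)
  finally show ?thesis
    unfolding N_def .
qed

theorem proposition2:
  fixes C :: "nat \<Rightarrow> ('n::finite) func \<Rightarrow> 'n func \<Rightarrow> 'n func"
    and "is" :: "'n list" and f :: "'n func"
  assumes "star_cochains C" and "weyl C" and "stable_unity C"
    and "length is \<ge> 2" and "smooth f"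
  shows "(\<lambda>m x. \<Sum>k<length is.
            associator C (emb (coord (is ! k)))
              (emb (coordprod (take k is @ drop (Suc k) is))) (emb f) m x)
         = (\<lambda>m x. 0)"
proof (intro ext)
  fix m x
  let ?X = "\<lambda>k. emb (coord (is ! k))"
  let ?P = "\<lambda>k. emb (coordprod (take k is @ drop (Suc k) is))"
  let ?\<Pi> = "emb (coordprod is)"
  have right_unit: "star C (emb h) (emb (\<lambda>_. 1)) = emb h" if "smooth h" for h
    using assms(3) that unfolding stable_unity_def by blast
  have sum_coord_star_cofactor: "(\<Sum>k<length is. 1 * star C (?X k) (?P k) m' x') = of_nat (length is) * ?\<Pi> m' x'" for m' x'
    using sum_star_coord_star_coordprod_remove_nth[OF assms(1,2) smooth_const assms(4), of 1 m' x']
    by (simp add: right_unit smooth_coordprod)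
  have "(\<Sum>k<length is. star C (star C (?X k) (?P k)) (emb f) m x)
      = star C (\<lambda>m x. \<Sum>k<length is. 1 * star C (?X k) (?P k) m x) (emb f) m x"
    by (subst star_lincomb(2)[OF assms(1) smooth_ser_emb[OF assms(5)]])
      (auto intro!: smooth_ser_star[OF assms(1)] smooth_ser_emb smooth_coord smooth_coordprod)
  also have "\<dots> = star C (\<lambda>m x. \<Sum>j\<in>{0::nat}. of_nat (length is) * ?\<Pi> m x) (emb f) m x"
    by (simp only: sum_coord_star_cofactor) simp
  also have "\<dots> = of_nat (length is) * star C ?\<Pi> (emb f) m x"
    by (subst star_lincomb(2)[OF assms(1) smooth_ser_emb[OF assms(5)]])
      (auto intro: smooth_ser_emb smooth_coordprod)
  finally show "(\<Sum>k<length is. associator C (?X k) (?P k) (emb f) m x) = 0"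
    using sum_star_coord_star_coordprod_remove_nth[OF assms(1,2,5,4)]
    by (simp add: associator_def sum_subtractf)
qed

end
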